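(* For every integer $t\geq 1$, \[ rx_3(K_{2,t})=\begin{cases} 2, & \text{if } t=1,2;\\ 3, & \text{if } t=3,4;\\ 4, & \text{if } 5\leq t\leq 8;\\ 5, & \text{if } 9\leq t\leq 20;\\ k, & \text{if } (k-1)(k-2)+1\leq t\leq k(k-1) \text{ for an integer } k\geq 6. \end{cases} \]
   Context: All graphs are simple, finite, undirected. An edge coloring of a graph $G$ is any assignment of colors to the edges (adjacent edges may receive the same color). A tree $T$ in an edge-colored graph is a rainbow tree if no two edges of $T$ have the same color. For $S\subseteq V(G)$, an $S$-tree is a subtree of $G$ containing all vertices of $S$. For an integer $k\ge 2$, a $k$-rainbow coloring of $G$ is an edge coloring such that for every set $S$ of $k$ vertices of $G$ there is a rainbow $S$-tree in $G$. The $k$-rainbow index $rx_k(G)$ is the minimum number of colors in a $k$-rainbow coloring of $G$. $K_{2,t}$ denotes the complete bipartite graph with parts of sizes $2$ and $t$. *)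

theory Defs
  imports Main
begin

definition simple_graph :: "'a set \<Rightarrow> 'a set set \<Rightarrow> bool" where
  "simple_graph V E \<longleftrightarrow> finite V \<and> (\<forall>e\<in>E. e \<subseteq> V \<and> card e = 2)"

definition connected_graph :: "'a set \<Rightarrow> 'a set set \<Rightarrow> bool" where
  "connected_graph VT ET \<longleftrightarrow>
     (\<forall>u\<in>VT. \<forall>v\<in>VT. (\<lambda>x y. {x, y} \<in> ET)\<^sup>*\<^sup>* u v)"

definition is_cycle :: "'a set set \<Rightarrow> 'a list \<Rightarrow> bool" where
  "is_cycle ET vs \<longleftrightarrow> length vs \<ge> 3 \<and> distinct vs \<and>
     (\<forall>i < length vs. {vs ! i, vs ! ((i + 1) mod length vs)} \<in> ET)"

definition acyclic_graph :: "'a set set \<Rightarrow> bool" where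
  "acyclic_graph ET \<longleftrightarrow> (\<nexists>vs. is_cycle ET vs)"

definition subtree :: "'a set \<Rightarrow> 'a set set \<Rightarrow> 'a set \<Rightarrow> 'a set set \<Rightarrow> bool" where
  "subtree V E VT ET \<longleftrightarrow> VT \<noteq> {} \<and> VT \<subseteq> V \<and> ET \<subseteq> E \<and> (\<forall>e\<in>ET. e \<subseteq> VT)
     \<and> connected_graph VT ET \<and> acyclic_graph ET"

definition rainbow :: "('a set \<Rightarrow> nat) \<Rightarrow> 'a set set \<Rightarrow> bool" where
  "rainbow c ET \<longleftrightarrow> inj_on c ET"

definition k_rainbow_coloring :: "'a set \<Rightarrow> 'a set set \<Rightarrow> nat \<Rightarrow> ('a set \<Rightarrow> nat) \<Rightarrow> bool" where
  "k_rainbow_coloring V E k c \<longleftrightarrow>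
     (\<forall>S. S \<subseteq> V \<and> card S = k \<longrightarrow>
        (\<exists>VT ET. subtree V E VT ET \<and> S \<subseteq> VT \<and> rainbow c ET))"

definition rainbow_index :: "nat \<Rightarrow> 'a set \<Rightarrow> 'a set set \<Rightarrow> nat" where
  "rainbow_index k V E = (LEAST n. \<exists>c. k_rainbow_coloring V E k c \<and> card (c ` E) = n)"

text \<open>K_{2,t}: vertices 0,1 form one part, 2,...,t+1 the other.\<close>
definition K2t_vertices :: "nat \<Rightarrow> nat set" where
  "K2t_vertices t = {0..<t+2}"

definition K2t_edges :: "nat \<Rightarrow> nat set set" where
  "K2t_edges t = {{a, b} | a b. a < 2 \<and> 2 \<le> b \<and> b < t + 2}"

end

theory Submission
  imports Defs
begin

text \<open>
  Give each vertex w of the right part {2, ..., t + 1} the pair (c {0,w}, c {1,w}) of colors of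
  its two edges. A tree containing three right vertices either misses 0 or 1, and then joins all
  three to the other one, or it passes from 0 to 1 through a common neighbor m. Hence any three pairs
  admit three distinct representatives, which by counting 2-subsets of the n colors gives
  t \<le> n (n - 1); with at most four colors the possible shapes are so restricted that pigeonhole
  arguments give t \<le> 4 for n = 3 and t \<le> 8 for n = 4.

  Conversely, t distinct ordered pairs of distinct colors below k give a 3-rainbow coloring
  with k colors as soon as every transitive triangle (a,g), (a,b), (g,b) of pairs is avoided by
  some further pair: that pair's vertex can then serve as the connector of a double star. For
  k \<ge> 6 any t \<ge> (k - 1)(k - 2) of all k (k - 1) pairs, listed by increasing maximum, work;
  for k \<le> 5 explicit lists are checked by evaluation.
\<close>

section \<open>Trees\<close>

definition is_tree :: "'a set \<Rightarrow> 'a set set \<Rightarrow> bool" where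
  "is_tree VT ET \<longleftrightarrow> VT \<noteq> {} \<and> (\<forall>e\<in>ET. e \<subseteq> VT) \<and> connected_graph VT ET \<and> acyclic_graph ET"

lemma subtreeI: "is_tree VT ET \<Longrightarrow> VT \<subseteq> V \<Longrightarrow> ET \<subseteq> E \<Longrightarrow> subtree V E VT ET"
  unfolding is_tree_def subtree_def by auto

lemma is_tree_singleton: "is_tree {r} {}"
  unfolding is_tree_def connected_graph_def acyclic_graph_def is_cycle_def
  by (auto intro: exI[of _ 0])

lemma mod_succ_neq_mod_pred:
  fixes i n :: nat
  assumes "3 \<le> n" "i < n"
  shows "(i + 1) mod n \<noteq> (i + n - 1) mod n"
proof -
  consider "i = 0" | "i + 1 = n" | "0 < i" "i + 1 < n" using assms by linarith
  then show ?thesis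
  proof cases
    case 1
    then show ?thesis using assms by simp
  next
    case 2
    then have "i + n - 1 = (n - 2) + n" using assms by simp
    then show ?thesis using 2 assms by (simp only: mod_add_self2) simp
  next
    case 3
    then have "i + n - 1 = (i - 1) + n" by simp
    then show ?thesis using 3 by (simp only: mod_add_self2) simp
  qed
qed

lemma is_cycle_edge_pred:
  assumes "is_cycle ET vs" "i < length vs"
  shows "{vs ! ((i + length vs - 1) mod length vs), vs ! i} \<in> ET"
proof -
  let ?n = "length vs" and ?j = "(i + length vs - 1) mod length vs"
  have "?n \<ge> 3" using assms unfolding is_cycle_def by auto
  have "(?j + 1) mod ?n = (i + ?n - 1 + 1) mod ?n" by (rule mod_add_left_eq)
  also have "i + ?n - 1 + 1 = i + ?n" using \<open>?n \<ge> 3\<close> by linarith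
  also have "(i + ?n) mod ?n = i" using assms(2) by simp
  finally have "(?j + 1) mod ?n = i" .
  moreover have "?j < ?n" using \<open>?n \<ge> 3\<close> by (intro mod_less_divisor, linarith)
  ultimately show ?thesis using assms(1) unfolding is_cycle_def by metis
qed

lemma connected_graph_add_leaf:
  assumes conn: "connected_graph VT ET" and "x \<in> VT"
  shows "connected_graph (insert y VT) (insert {x,y} ET)"
proof -
  let ?R = "\<lambda>p q. {p, q} \<in> insert {x,y} ET"
  have "?R\<^sup>*\<^sup>* p x \<and> ?R\<^sup>*\<^sup>* x p" if "p \<in> insert y VT" for p
  proof (cases "p = y")
    case True
    then show ?thesis by (auto simp: insert_commute intro: r_into_rtranclp)
  next
    case False
    then have "(\<lambda>p q. {p, q} \<in> ET)\<^sup>*\<^sup>* p x \<and> (\<lambda>p q. {p, q} \<in> ET)\<^sup>*\<^sup>* x p"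
      using conn that \<open>x \<in> VT\<close> unfolding connected_graph_def by auto
    then show ?thesis by (auto elim: rtranclp_mono[THEN predicate2D, rotated])
  qed
  then show ?thesis unfolding connected_graph_def by (blast intro: rtranclp_trans)
qed

text \<open>A cycle through the new leaf y would need two distinct neighbors of y, but y has only x.\<close>
lemma acyclic_graph_add_leaf:
  assumes acyc: "acyclic_graph ET" and fresh: "\<forall>e\<in>ET. y \<notin> e" and "x \<noteq> y"
  shows "acyclic_graph (insert {x,y} ET)"
  unfolding acyclic_graph_def
proof
  assume "\<exists>vs. is_cycle (insert {x,y} ET) vs"
  then obtain vs where cyc: "is_cycle (insert {x,y} ET) vs" by blast
  let ?n = "length vs"
  have n3: "?n \<ge> 3" and dist: "distinct vs" using cyc unfolding is_cycle_def by auto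
  show False
  proof (cases "y \<in> set vs")
    case True
    then obtain i where i: "i < ?n" "vs ! i = y" by (metis in_set_conv_nth)
    let ?succ = "(i + 1) mod ?n" and ?pred = "(i + ?n - 1) mod ?n"
    have "{y, vs ! ?succ} \<in> insert {x,y} ET" "{vs ! ?pred, y} \<in> insert {x,y} ET"
      using cyc i is_cycle_edge_pred[OF cyc i(1)] unfolding is_cycle_def by auto
    then have "vs ! ?succ = x" "vs ! ?pred = x"
      using fresh \<open>x \<noteq> y\<close> by (auto simp: doubleton_eq_iff)
    moreover have "?succ < ?n" "?pred < ?n" using n3 by (auto intro!: mod_less_divisor)
    ultimately have "?succ = ?pred" using nth_eq_iff_index_eq[OF dist] by metis
    then show False using mod_succ_neq_mod_pred[OF n3 i(1)] by simp
  next
    case False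
    have "{vs ! i, vs ! ((i + 1) mod ?n)} \<in> ET" if "i < ?n" for i
    proof -
      have "(i + 1) mod ?n < ?n" using n3 by (intro mod_less_divisor, linarith)
      then have "y \<notin> {vs ! i, vs ! ((i + 1) mod ?n)}" using False that nth_mem by auto
      then show ?thesis using cyc that unfolding is_cycle_def by auto
    qed
    then have "is_cycle ET vs" using n3 dist unfolding is_cycle_def by auto
    then show False using acyc unfolding acyclic_graph_def by auto
  qed
qed

lemma is_tree_add_leaf:
  assumes tree: "is_tree VT ET" and "x \<in> VT" "y \<notin> VT"
  shows "is_tree (insert y VT) (insert {x,y} ET)"
proof -
  have sub: "\<forall>e\<in>ET. e \<subseteq> VT" using tree unfolding is_tree_def by auto
  then have "\<forall>e\<in>ET. y \<notin> e" using \<open>y \<notin> VT\<close> by auto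
  then have "acyclic_graph (insert {x,y} ET)"
    using tree \<open>x \<in> VT\<close> \<open>y \<notin> VT\<close> unfolding is_tree_def by (intro acyclic_graph_add_leaf) auto
  moreover have "connected_graph (insert y VT) (insert {x,y} ET)"
    using tree \<open>x \<in> VT\<close> unfolding is_tree_def by (intro connected_graph_add_leaf) auto
  ultimately show ?thesis using sub \<open>x \<in> VT\<close> unfolding is_tree_def by auto
qed

lemma is_tree_add_leaves:
  assumes "is_tree VT ET" "x \<in> VT" "finite L" "L \<inter> VT = {}"
  shows "is_tree (VT \<union> L) (ET \<union> (\<lambda>w. {x,w}) ` L)"
  using assms(3,4)
proof (induction L rule: finite_induct)
  case empty
  then show ?case using assms(1) by simp
next
  case (insert w L)
  then have "is_tree (insert w (VT \<union> L)) (insert {x,w} (ET \<union> (\<lambda>w. {x,w}) ` L))"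
    using assms(2) by (intro is_tree_add_leaf) auto
  then show ?case by simp
qed

lemma subtree_edge_at:
  assumes "subtree V E VT ET" "x \<in> VT" "y \<in> VT" "x \<noteq> y"
  obtains z where "{x,z} \<in> ET"
proof -
  have "(\<lambda>p q. {p, q} \<in> ET)\<^sup>*\<^sup>* x y" using assms unfolding subtree_def connected_graph_def by auto
  then show ?thesis using assms(4) that by (cases rule: converse_rtranclpE) auto
qed

lemma rainbow_distinct_map: "rainbow c ET \<Longrightarrow> distinct es \<Longrightarrow> set es \<subseteq> ET \<Longrightarrow> distinct (map c es)"
  unfolding rainbow_def by (simp add: distinct_map inj_on_subset)

definition has_rainbow_tree :: "'a set \<Rightarrow> 'a set set \<Rightarrow> ('a set \<Rightarrow> nat) \<Rightarrow> 'a set \<Rightarrow> bool" where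
  "has_rainbow_tree V E c S \<longleftrightarrow> (\<exists>VT ET. subtree V E VT ET \<and> S \<subseteq> VT \<and> rainbow c ET)"

lemma k_rainbow_coloring_iff:
  "k_rainbow_coloring V E k c \<longleftrightarrow> (\<forall>S. S \<subseteq> V \<and> card S = k \<longrightarrow> has_rainbow_tree V E c S)"
  unfolding k_rainbow_coloring_def has_rainbow_tree_def ..

lemma has_rainbow_tree_subset: "has_rainbow_tree V E c S \<Longrightarrow> S' \<subseteq> S \<Longrightarrow> has_rainbow_tree V E c S'"
  unfolding has_rainbow_tree_def by blast

lemma has_rainbow_treeI:
  "is_tree VT ET \<Longrightarrow> VT \<subseteq> V \<Longrightarrow> ET \<subseteq> E \<Longrightarrow> S \<subseteq> VT \<Longrightarrow> inj_on c ET \<Longrightarrow> has_rainbow_tree V E c S"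
  unfolding has_rainbow_tree_def rainbow_def by (metis subtreeI)

lemma rainbow_tree_3E:
  assumes "k_rainbow_coloring V E 3 c" "x \<in> V" "y \<in> V" "z \<in> V" "distinct [x,y,z]"
  obtains VT ET where "subtree V E VT ET" "x \<in> VT" "y \<in> VT" "z \<in> VT" "rainbow c ET"
proof -
  have "{x,y,z} \<subseteq> V \<and> card {x,y,z} = 3" using assms(2-5) by auto
  then have "has_rainbow_tree V E c {x,y,z}" using assms(1) unfolding k_rainbow_coloring_iff by blast
  then show ?thesis using that unfolding has_rainbow_tree_def by auto
qed

section \<open>Counting color pairs\<close>

lemma distinct_length_le_card: "distinct xs \<Longrightarrow> set xs \<subseteq> K \<Longrightarrow> finite K \<Longrightarrow> length xs \<le> card K"
  by (metis card_mono distinct_card)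

lemma rainbow_length_le_card_colors:
  assumes "rainbow c ET" "ET \<subseteq> E" "finite E" "distinct es" "set es \<subseteq> ET"
  shows "length es \<le> card (c ` E)"
proof -
  have "distinct (map c es)" using rainbow_distinct_map assms(1,4,5) .
  moreover have "set (map c es) \<subseteq> c ` E" using assms(2,5) by auto
  ultimately show ?thesis using distinct_length_le_card[of "map c es"] assms(3) by simp
qed

lemma card_gt_1E:
  assumes "1 < card F"
  obtains a b where "a \<in> F" "b \<in> F" "a \<noteq> b"
proof -
  have "finite F" using assms by (metis card.infinite not_less_zero)
  then obtain S where "S \<subseteq> F" "card S = 2" using obtain_subset_with_card_n[of 2 F] assms by auto
  then show ?thesis using that unfolding card_2_iff by auto
qed

lemma card_gt_2E:
  assumes "2 < card F"
  obtains a b d where "a \<in> F" "b \<in> F" "d \<in> F" "distinct [a,b,d]"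
proof -
  have "finite F" using assms by (metis card.infinite not_less_zero)
  then obtain S where "S \<subseteq> F" "card S = 3" using obtain_subset_with_card_n[of 3 F] assms by auto
  then show ?thesis using that unfolding card_3_iff by auto
qed

lemma pigeonhole_fiber:
  assumes "finite X" "finite K" "f ` X \<subseteq> K" "card K * b < card X"
  obtains k where "k \<in> K" "b < card {x \<in> X. f x = k}"
proof -
  have "\<exists>k\<in>K. b < card {x \<in> X. f x = k}"
  proof (rule ccontr)
    assume "\<not> ?thesis"
    then have small: "\<And>k. k \<in> K \<Longrightarrow> card {x \<in> X. f x = k} \<le> b" by (simp add: not_less)
    have fibers: "(\<Union>k\<in>K. {x \<in> X. f x = k}) = X" using assms(3) by auto
    have "card (\<Union>k\<in>K. {x \<in> X. f x = k}) = (\<Sum>k\<in>K. card {x \<in> X. f x = k})"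
      by (rule card_UN_disjoint) (use assms(1,2) in auto)
    then have "card X = (\<Sum>k\<in>K. card {x \<in> X. f x = k})" by (simp only: fibers)
    also have "\<dots> \<le> card K * b" using small sum_bounded_above[of K _ b] by simp
    finally show False using assms(4) by simp
  qed
  then show ?thesis using that by blast
qed

lemma unique_in_Diff_if_card_Suc:
  assumes "finite K" "S \<subseteq> K" "card K = Suc (card S)" "x \<in> K - S" "y \<in> K - S"
  shows "x = y"
proof -
  have "card (K - S) = 1" using assms(1-3) by (simp add: card_Diff_subset finite_subset)
  then show ?thesis using assms(4,5) by (metis card_1_singletonE singletonD)
qed

lemma inj_on_if_triples:
  assumes "card G \<ge> 3"
    and "\<And>g g' g''. g \<in> G \<Longrightarrow> g' \<in> G \<Longrightarrow> g'' \<in> G \<Longrightarrow> distinct [g,g',g''] \<Longrightarrow> f g \<noteq> f g'"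
  shows "inj_on f G"
proof (rule inj_onI, rule ccontr)
  fix g g' assume g: "g \<in> G" "g' \<in> G" "f g = f g'" "g \<noteq> g'"
  have "finite G" using assms(1) by (metis card.infinite not_numeral_le_zero)
  then have "card (G - {g,g'}) \<ge> 1" using g assms(1) by (simp add: card_Diff_subset)
  then obtain g'' where "g'' \<in> G - {g,g'}" by (metis card.empty ex_in_conv not_one_le_zero)
  then show False using assms(2)[of g g' g''] g by auto
qed

lemma card_le_ordered_pairs_if_distinct_choices:
  assumes fin: "finite X" "finite K" and K2: "2 \<le> card K" and AB: "A ` X \<subseteq> K" "B ` X \<subseteq> K"
    and choice: "\<And>x y z. x \<in> X \<Longrightarrow> y \<in> X \<Longrightarrow> z \<in> X \<Longrightarrow> distinct [x,y,z] \<Longrightarrow>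
       \<exists>a\<in>{A x, B x}. \<exists>b\<in>{A y, B y}. \<exists>d\<in>{A z, B z}. distinct [a,b,d]"
  shows "card X \<le> card K * (card K - 1)"
proof (rule ccontr)
  let ?Q = "{P. P \<subseteq> K \<and> card P = 2}"
  assume "\<not> ?thesis"
  moreover have "card ?Q * 2 = card K * (card K - 1)"
  proof -
    have "even (card K * (card K - 1))" by (cases "even (card K)") auto
    then show ?thesis using n_subsets[OF fin(2), of 2] by (simp add: choose_two)
  qed
  ultimately have many: "card ?Q * 2 < card X" by simp
  have "\<exists>P. {A x, B x} \<subseteq> P \<and> P \<subseteq> K \<and> card P = 2" if "x \<in> X" for x
  proof (rule exists_subset_between)
    show "card {A x, B x} \<le> 2" by (cases "A x = B x") auto
  qed (use that AB K2 fin(2) in auto)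
  then have "\<forall>x\<in>X. \<exists>P. P \<in> ?Q \<and> {A x, B x} \<subseteq> P" by blast
  from bchoice[OF this] obtain g where g: "\<forall>x\<in>X. g x \<in> ?Q \<and> {A x, B x} \<subseteq> g x" by blast
  have "g ` X \<subseteq> ?Q" using g by blast
  have "finite ?Q" using fin(2) by simp
  then obtain P where P: "P \<in> ?Q" "2 < card {x \<in> X. g x = P}"
    using pigeonhole_fiber[OF fin(1) _ \<open>g ` X \<subseteq> ?Q\<close> many] by blast
  then obtain x y z where xyz: "x \<in> X" "y \<in> X" "z \<in> X" "distinct [x,y,z]" "g x = P" "g y = P" "g z = P"
    by (elim card_gt_2E) auto
  from choice[OF xyz(1-4)] obtain a b d
    where "a \<in> {A x, B x}" "b \<in> {A y, B y}" "d \<in> {A z, B z}" "distinct [a,b,d]"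
    by blast
  then have "set [a,b,d] \<subseteq> P" "distinct [a,b,d]" using xyz g by auto
  moreover have "finite P" using P(1) fin(2) finite_subset by blast
  ultimately have "3 \<le> card P" using distinct_length_le_card[of "[a,b,d]" P] by simp
  then show False using P(1) by simp
qed

definition hub_condition :: "'b \<Rightarrow> 'b \<Rightarrow> 'b \<Rightarrow> 'b \<Rightarrow> 'b \<Rightarrow> 'b \<Rightarrow> bool" where
  "hub_condition a b a1 b1 a2 b2 \<longleftrightarrow> (\<exists>x\<in>{a1,b1}. \<exists>y\<in>{a2,b2}. distinct [a,b,x,y])"

text \<open>If a rainbow tree with at most four colors contains three right vertices, it joins all
  three to 0, or all three to 1, or it passes from 0 to 1 through one of them; the color pairs
  (ai, bi) at the three vertices then satisfy the corresponding disjunct.\<close>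
definition triple_condition :: "'b \<Rightarrow> 'b \<Rightarrow> 'b \<Rightarrow> 'b \<Rightarrow> 'b \<Rightarrow> 'b \<Rightarrow> bool" where
  "triple_condition a1 b1 a2 b2 a3 b3 \<longleftrightarrow> distinct [a1,a2,a3] \<or> distinct [b1,b2,b3]
     \<or> hub_condition a1 b1 a2 b2 a3 b3 \<or> hub_condition a2 b2 a1 b1 a3 b3 \<or> hub_condition a3 b3 a1 b1 a2 b2"

lemma triple_condition_same_first: "triple_condition a b1 a b2 a b3 \<Longrightarrow> distinct [b1,b2,b3]"
  unfolding triple_condition_def hub_condition_def by auto

lemma triple_condition_same_second: "triple_condition a1 b a2 b a3 b \<Longrightarrow> distinct [a1,a2,a3]"
  unfolding triple_condition_def hub_condition_def by auto

lemma triple_condition_forces_hub: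
  "triple_condition x b a b a b' \<Longrightarrow> b \<noteq> b' \<Longrightarrow> distinct [a, b, b', x]"
  unfolding triple_condition_def hub_condition_def by auto

lemma triple_condition_three_values:
  assumes "triple_condition a1 b1 a2 b2 a3 b3" "{a1,b1,a2,b2,a3,b3} \<subseteq> K" "finite K" "card K \<le> 3"
  shows "distinct [a1,a2,a3] \<or> distinct [b1,b2,b3]"
proof -
  have "\<not> distinct [a,b,x,y]" if "{a,b,x,y} \<subseteq> K" for a b x y
    using distinct_length_le_card[of "[a,b,x,y]" K] that assms(3,4) by auto
  then show ?thesis using assms(1,2) unfolding triple_condition_def hub_condition_def by blast
qed

lemma card_le_4_if_distinct_first_or_second:
  assumes fin: "finite X" "finite K" and K3: "card K = 3" and AB: "A ` X \<subseteq> K" "B ` X \<subseteq> K"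
    and triples: "\<And>x y z. x \<in> X \<Longrightarrow> y \<in> X \<Longrightarrow> z \<in> X \<Longrightarrow> distinct [x,y,z] \<Longrightarrow>
       distinct [A x, A y, A z] \<or> distinct [B x, B y, B z]"
  shows "card X \<le> 4"
proof (rule ccontr)
  assume "\<not> card X \<le> 4"
  then obtain \<alpha> where "1 < card {x \<in> X. A x = \<alpha>}"
    using pigeonhole_fiber[OF fin AB(1), of 1] K3 by auto
  then obtain w1 w2 where w: "w1 \<in> X" "w2 \<in> X" "w1 \<noteq> w2" "A w1 = A w2"
    by (elim card_gt_1E) auto
  define G where "G = X - {w1, w2}"
  have GX: "G \<subseteq> X" unfolding G_def by auto
  have card_G: "card G = card X - 2" unfolding G_def using w fin(1) by (simp add: card_Diff_subset)
  with \<open>\<not> card X \<le> 4\<close> have "3 \<le> card G" by simp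
  have B_new: "B g \<notin> {B w1, B w2} \<and> B w1 \<noteq> B w2" if "g \<in> G" for g
    using triples[of w1 w2 g] w that unfolding G_def by auto
  have B_const: "B g = B g'" if "g \<in> G" "g' \<in> G" for g g'
  proof (rule unique_in_Diff_if_card_Suc[OF fin(2)])
    show "{B w1, B w2} \<subseteq> K" "card K = Suc (card {B w1, B w2})"
      using AB w K3 B_new[OF that(1)] by auto
    show "B g \<in> K - {B w1, B w2}" "B g' \<in> K - {B w1, B w2}"
      using AB GX that B_new by blast+
  qed
  have inj: "inj_on A G"
  proof (rule inj_on_if_triples[OF \<open>3 \<le> card G\<close>])
    fix g g' g'' assume g: "g \<in> G" "g' \<in> G" "g'' \<in> G" "distinct [g,g',g'']"
    then show "A g \<noteq> A g'" using triples[of g g' g''] B_const[of g g'] B_const[of g g''] GX by auto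
  qed
  moreover have "A ` G \<subseteq> K" using AB(1) GX by blast
  ultimately have "A ` G = K"
    using \<open>3 \<le> card G\<close> K3 fin(2) card_inj_on_le[OF inj] by (metis card_image card_subset_eq le_antisym)
  then obtain g0 where g0: "g0 \<in> G" "A g0 = A w1" using AB w(1) by (metis imageE image_subset_iff)
  have "card (G - {g0}) \<ge> 1" using \<open>3 \<le> card G\<close> g0(1) by (simp add: card_Diff_singleton)
  then obtain g1 where g1: "g1 \<in> G - {g0}" by (metis card.empty ex_in_conv not_one_le_zero)
  have "distinct [w1, g0, g1]" using g0 g1 unfolding G_def by auto
  then show False using triples[of w1 g0 g1] g0 g1 B_const[of g0 g1] w GX by auto
qed

lemma triple_condition_shared_second_absurd:
  assumes "triple_condition x b a b a b'" "triple_condition x b a b a b''" "distinct [b, b', b'']"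
    and "{a, b, b', b'', x} \<subseteq> K" "finite K" "card K \<le> 4"
  shows False
proof -
  have "distinct [a, b, b', x]" using triple_condition_forces_hub[OF assms(1)] assms(3) by simp
  moreover have "distinct [a, b, b'', x]" using triple_condition_forces_hub[OF assms(2)] assms(3) by simp
  ultimately have "distinct [a, b, b', b'', x]" using assms(3) by auto
  then show False using distinct_length_le_card[of "[a, b, b', b'', x]" K] assms(4-6) by simp
qed

lemma triple_condition_second_outside:
  assumes fin: "finite K" "card K \<le> 4" and AB: "A ` X \<subseteq> K" "B ` X \<subseteq> K"
    and triples: "\<And>x y z. x \<in> X \<Longrightarrow> y \<in> X \<Longrightarrow> z \<in> X \<Longrightarrow> distinct [x,y,z] \<Longrightarrow>
       triple_condition (A x) (B x) (A y) (B y) (A z) (B z)"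
    and w: "w1 \<in> X" "w2 \<in> X" "w3 \<in> X" and A_w: "A w1 = \<alpha>" "A w2 = \<alpha>" "A w3 = \<alpha>"
    and B_w: "distinct [B w1, B w2, B w3]"
    and g: "g \<in> X" "g \<notin> {w1, w2, w3}"
  shows "B g \<notin> {B w1, B w2, B w3}"
proof
  have dist: "distinct [g, w1, w2, w3]" using g B_w by auto
  have K: "{\<alpha>, B w1, B w2, B w3, A g} \<subseteq> K" using AB w g A_w by auto
  assume "B g \<in> {B w1, B w2, B w3}"
  then consider "B g = B w1" | "B g = B w2" | "B g = B w3" by blast
  then show False
  proof cases
    case 1
    then show False using triples[of g w1 w2] triples[of g w1 w3] g w dist A_w B_w K fin
      by (intro triple_condition_shared_second_absurd[of "A g" "B w1" \<alpha> "B w2" "B w3" K]) auto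
  next
    case 2
    then show False using triples[of g w2 w1] triples[of g w2 w3] g w dist A_w B_w K fin
      by (intro triple_condition_shared_second_absurd[of "A g" "B w2" \<alpha> "B w1" "B w3" K]) auto
  next
    case 3
    then show False using triples[of g w3 w1] triples[of g w3 w2] g w dist A_w B_w K fin
      by (intro triple_condition_shared_second_absurd[of "A g" "B w3" \<alpha> "B w1" "B w2" K]) auto
  qed
qed

lemma card_le_8_if_triple_condition:
  assumes fin: "finite X" "finite K" and K4: "card K = 4" and AB: "A ` X \<subseteq> K" "B ` X \<subseteq> K"
    and triples: "\<And>x y z. x \<in> X \<Longrightarrow> y \<in> X \<Longrightarrow> z \<in> X \<Longrightarrow> distinct [x,y,z] \<Longrightarrow>
       triple_condition (A x) (B x) (A y) (B y) (A z) (B z)"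
  shows "card X \<le> 8"
proof (rule ccontr)
  assume "\<not> card X \<le> 8"
  then obtain \<alpha> where "2 < card {x \<in> X. A x = \<alpha>}"
    using pigeonhole_fiber[OF fin AB(1), of 2] K4 by auto
  then obtain w1 w2 w3 where w: "w1 \<in> X" "w2 \<in> X" "w3 \<in> X" "distinct [w1,w2,w3]"
    and A_w: "A w1 = \<alpha>" "A w2 = \<alpha>" "A w3 = \<alpha>"
    by (elim card_gt_2E) auto
  have B_w: "distinct [B w1, B w2, B w3]"
    using triples[OF w] A_w by (metis triple_condition_same_first)
  define G where "G = X - {w1, w2, w3}"
  have GX: "G \<subseteq> X" unfolding G_def by auto
  have card_G: "card G = card X - 3" unfolding G_def using w fin(1) by (simp add: card_Diff_subset)
  have B_new: "B g \<notin> {B w1, B w2, B w3}" if "g \<in> G" for g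
    using triple_condition_second_outside[OF fin(2) _ AB triples w(1-3) A_w B_w] that K4
    unfolding G_def by auto
  have B_const: "B g = B g'" if "g \<in> G" "g' \<in> G" for g g'
  proof (rule unique_in_Diff_if_card_Suc[OF fin(2)])
    show "{B w1, B w2, B w3} \<subseteq> K" "card K = Suc (card {B w1, B w2, B w3})"
      using AB w K4 B_w by auto
    show "B g \<in> K - {B w1, B w2, B w3}" "B g' \<in> K - {B w1, B w2, B w3}"
      using AB GX that B_new by blast+
  qed
  have "inj_on A G"
  proof (rule inj_on_if_triples)
    show "3 \<le> card G" using card_G \<open>\<not> card X \<le> 8\<close> by simp
    fix g g' g'' assume g: "g \<in> G" "g' \<in> G" "g'' \<in> G" "distinct [g,g',g'']"
    then have "triple_condition (A g) (B g) (A g') (B g) (A g'') (B g)"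
      using triples[of g g' g''] B_const[of g g'] B_const[of g g''] GX by auto
    then show "A g \<noteq> A g'" by (auto dest: triple_condition_same_second)
  qed
  moreover have "A ` G \<subseteq> K" using AB(1) GX by blast
  ultimately have "card G \<le> card K" using card_inj_on_le fin(2) by blast
  then show False using card_G K4 \<open>\<not> card X \<le> 8\<close> by simp
qed

section \<open>The graph \<open>K\<^sub>2\<^sub>,\<^sub>t\<close>\<close>

definition K2t_right :: "nat \<Rightarrow> nat set" where
  "K2t_right t = {2..<t+2}"

lemma K2t_right_ge_2: "w \<in> K2t_right t \<Longrightarrow> 2 \<le> w"
  unfolding K2t_right_def by simp

lemma finite_K2t_right: "finite (K2t_right t)"
  unfolding K2t_right_def by simp

lemma card_K2t_right: "card (K2t_right t) = t"
  unfolding K2t_right_def by simp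

lemma K2t_vertices_cases: "v \<in> K2t_vertices t \<Longrightarrow> v = 0 \<or> v = 1 \<or> v \<in> K2t_right t"
  unfolding K2t_vertices_def K2t_right_def by auto

lemma K2t_vertices_memI: "z < 2 \<Longrightarrow> z \<in> K2t_vertices t" "w \<in> K2t_right t \<Longrightarrow> w \<in> K2t_vertices t"
  unfolding K2t_vertices_def K2t_right_def by auto

lemma K2t_edgeI: "z < 2 \<Longrightarrow> w \<in> K2t_right t \<Longrightarrow> {z,w} \<in> K2t_edges t"
  unfolding K2t_edges_def K2t_right_def by auto

lemma K2t_edgeE:
  assumes "{x,y} \<in> K2t_edges t"
  shows "(x < 2 \<and> y \<in> K2t_right t) \<or> (y < 2 \<and> x \<in> K2t_right t)"
  using assms unfolding K2t_edges_def K2t_right_def by (auto simp: doubleton_eq_iff)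

lemma K2t_edge_eq_iff:
  "(z::nat) < 2 \<Longrightarrow> z' < 2 \<Longrightarrow> 2 \<le> w \<Longrightarrow> 2 \<le> w' \<Longrightarrow> {z,w} = {z',w'} \<longleftrightarrow> z = z' \<and> w = w'"
  by (auto simp: doubleton_eq_iff)

lemma finite_K2t_edges: "finite (K2t_edges t)"
proof -
  have "K2t_edges t \<subseteq> (\<lambda>(a,b). {a,b}) ` ({0..<2} \<times> {2..<t+2})"
    unfolding K2t_edges_def by auto
  then show ?thesis by (rule finite_subset) auto
qed

lemma K2t_star_rainbow:
  assumes "z < 2" "finite L" "L \<subseteq> K2t_right t" "inj_on (\<lambda>w. c {z,w}) L"
  shows "has_rainbow_tree (K2t_vertices t) (K2t_edges t) c (insert z L)"
proof -
  have "z \<notin> L" using assms(1,3) K2t_right_ge_2 by fastforce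
  then have tree: "is_tree ({z} \<union> L) ({} \<union> (\<lambda>w. {z,w}) ` L)"
    by (intro is_tree_add_leaves[OF is_tree_singleton]) (use assms(2) in auto)
  have "{z} \<union> L \<subseteq> K2t_vertices t" "{} \<union> (\<lambda>w. {z,w}) ` L \<subseteq> K2t_edges t"
    using assms(1,3) K2t_vertices_memI K2t_edgeI by blast+
  moreover have "inj_on c ({} \<union> (\<lambda>w. {z,w}) ` L)"
    using assms(4) by (simp add: inj_on_imageI comp_def)
  ultimately show ?thesis by (intro has_rainbow_treeI[OF tree]) simp_all
qed

lemma K2t_double_star_rainbow:
  assumes L: "finite L0" "finite L1" "L0 \<subseteq> K2t_right t" "L1 \<subseteq> K2t_right t" "L0 \<inter> L1 = {}"
    and m: "m \<in> K2t_right t" "m \<notin> L0 \<union> L1"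
    and inj: "inj_on c ({{0,m}, {1,m}} \<union> (\<lambda>w. {0,w}) ` L0 \<union> (\<lambda>w. {1,w}) ` L1)"
  shows "has_rainbow_tree (K2t_vertices t) (K2t_edges t) c ({0, 1, m} \<union> L0 \<union> L1)"
proof -
  have right_ge_2: "2 \<le> w" if "w \<in> insert m (L0 \<union> L1)" for w
    using that L m K2t_right_ge_2 by blast
  have "is_tree (insert m {0}) (insert {0,m} {})"
    by (rule is_tree_add_leaf[OF is_tree_singleton]) (use right_ge_2[of m] in auto)
  then have "is_tree (insert 1 (insert m {0})) (insert {m,1} (insert {0,m} {}))"
    by (rule is_tree_add_leaf) (use right_ge_2[of m] in auto)
  then have "is_tree (insert 1 (insert m {0}) \<union> L0) (insert {m,1} (insert {0,m} {}) \<union> (\<lambda>w. {0,w}) ` L0)"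
    by (rule is_tree_add_leaves) (use L m right_ge_2 in fastforce)+
  then have "is_tree (insert 1 (insert m {0}) \<union> L0 \<union> L1)
      (insert {m,1} (insert {0,m} {}) \<union> (\<lambda>w. {0,w}) ` L0 \<union> (\<lambda>w. {1,w}) ` L1)"
    by (rule is_tree_add_leaves) (use L m right_ge_2 in fastforce)+
  moreover have "insert 1 (insert m {0}) \<union> L0 \<union> L1 = {0, 1, m} \<union> L0 \<union> L1"
    "insert {m,1} (insert {0,m} {}) = {{0,m}, {1,m}}"
    by auto
  ultimately have tree: "is_tree ({0, 1, m} \<union> L0 \<union> L1)
      ({{0,m}, {1,m}} \<union> (\<lambda>w. {0,w}) ` L0 \<union> (\<lambda>w. {1,w}) ` L1)"
    by (simp add: insert_commute)
  have "{0, 1, m} \<union> L0 \<union> L1 \<subseteq> K2t_vertices t"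
    using L(3,4) m(1) K2t_vertices_memI by auto
  moreover have "{{0,m}, {1,m}} \<union> (\<lambda>w. {0,w}) ` L0 \<union> (\<lambda>w. {1,w}) ` L1 \<subseteq> K2t_edges t"
    using L(3,4) m(1) by (auto intro: K2t_edgeI)
  ultimately show ?thesis using has_rainbow_treeI[OF tree _ _ _ inj] by simp
qed

lemma K2t_left_color_cases: "(z::nat) < 2 \<Longrightarrow> c {z,w} \<in> {c {0,w}, c {1,w}}"
  by (cases z) auto

lemma K2t_subtree_left_neighbor:
  assumes T: "subtree (K2t_vertices t) (K2t_edges t) VT ET"
    and "w \<in> K2t_right t" "w \<in> VT" "y \<in> VT" "w \<noteq> y"
  obtains z where "z < 2" "z \<in> VT" "{z,w} \<in> ET"
proof -
  obtain z where z: "{w,z} \<in> ET" using subtree_edge_at[OF T assms(3-5)] .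
  have "ET \<subseteq> K2t_edges t" "\<forall>e\<in>ET. e \<subseteq> VT" using T unfolding subtree_def by auto
  then have "{w,z} \<in> K2t_edges t" "z \<in> VT" using z by auto
  then have "z < 2" using K2t_edgeE[of w z t] \<open>w \<in> K2t_right t\<close> K2t_right_ge_2 by fastforce
  then show ?thesis using that \<open>z \<in> VT\<close> z by (simp add: insert_commute)
qed

text \<open>Every edge leaving 0 or 1 enters the right part, so a walk from 0 to 1 passes
  through a common neighbor of 0 and 1.\<close>
lemma K2t_subtree_connector:
  assumes T: "subtree (K2t_vertices t) (K2t_edges t) VT ET" and "0 \<in> VT" "1 \<in> VT"
  obtains m where "m \<in> K2t_right t" "{0,m} \<in> ET" "{1,m} \<in> ET"
proof -
  have walk: "(\<lambda>p q. {p, q} \<in> ET)\<^sup>*\<^sup>* 0 1" using assms unfolding subtree_def connected_graph_def by auto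
  have edges: "ET \<subseteq> K2t_edges t" using T unfolding subtree_def by auto
  have "(\<lambda>p q. {p, q} \<in> ET)\<^sup>*\<^sup>* 0 y \<Longrightarrow>
     y = 0 \<or> (y \<in> K2t_right t \<and> {0,y} \<in> ET) \<or> (\<exists>m\<in>K2t_right t. {0,m} \<in> ET \<and> {1,m} \<in> ET)" for y
  proof (induction rule: rtranclp_induct)
    case (step y z)
    have e: "{y,z} \<in> K2t_edges t" using step(2) edges by auto
    from step(3) show ?case
    proof (elim disjE)
      assume "y = 0"
      then show ?thesis using step(2) K2t_edgeE[OF e] K2t_right_ge_2 by fastforce
    next
      assume y: "y \<in> K2t_right t \<and> {0, y} \<in> ET"
      then have "z = 0 \<or> z = 1" using K2t_edgeE[OF e] K2t_right_ge_2 by fastforce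
      then show ?thesis using y step(2) by (auto simp: insert_commute)
    qed simp
  qed simp
  from this[OF walk] show ?thesis using that K2t_right_ge_2 by fastforce
qed

section \<open>Lower bounds\<close>

lemma K2t_rainbow_hub:
  assumes T: "subtree (K2t_vertices t) (K2t_edges t) VT ET" "rainbow c ET"
    and m: "m \<in> K2t_right t" "{0,m} \<in> ET" "{1,m} \<in> ET"
    and u: "u \<in> K2t_right t" "z < 2" "{z,u} \<in> ET" and v: "v \<in> K2t_right t" "z' < 2" "{z',v} \<in> ET"
    and "distinct [m,u,v]"
  shows "hub_condition (c {0,m}) (c {1,m}) (c {0,u}) (c {1,u}) (c {0,v}) (c {1,v})"
proof -
  have "2 \<le> m" "2 \<le> u" "2 \<le> v" using m u v K2t_right_ge_2 by auto
  then have "distinct [{0,m}, {1,m}, {z,u}, {z',v}]"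
    using u v \<open>distinct [m,u,v]\<close> by (simp add: K2t_edge_eq_iff)
  then have "distinct (map c [{0,m}, {1,m}, {z,u}, {z',v}])"
    by (rule rainbow_distinct_map[OF T(2)]) (use m u v in auto)
  then show ?thesis
    unfolding hub_condition_def
    using K2t_left_color_cases[OF u(2), of c u] K2t_left_color_cases[OF v(2), of c v]
    by (intro bexI[of _ "c {z,u}"] bexI[of _ "c {z',v}"]) simp_all
qed

lemma K2t_rainbow_outside_hub:
  assumes T: "subtree (K2t_vertices t) (K2t_edges t) VT ET" "rainbow c ET"
    and m: "m \<in> K2t_right t" "{0,m} \<in> ET" "{1,m} \<in> ET"
    and w1: "w1 \<in> K2t_right t" "z1 < 2" "{z1,w1} \<in> ET" and w2: "w2 \<in> K2t_right t" "z2 < 2" "{z2,w2} \<in> ET"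
    and w3: "w3 \<in> K2t_right t" "z3 < 2" "{z3,w3} \<in> ET"
    and "distinct [m,w1,w2,w3]"
  shows "5 \<le> card (c ` K2t_edges t)"
proof -
  have "2 \<le> m" "2 \<le> w1" "2 \<le> w2" "2 \<le> w3" using m w1 w2 w3 K2t_right_ge_2 by auto
  then have "distinct [{0,m}, {1,m}, {z1,w1}, {z2,w2}, {z3,w3}]"
    using w1 w2 w3 \<open>distinct [m,w1,w2,w3]\<close> by (simp add: K2t_edge_eq_iff)
  moreover have "ET \<subseteq> K2t_edges t" using T(1) unfolding subtree_def by auto
  ultimately have "length [{0,m}, {1,m}, {z1,w1}, {z2,w2}, {z3,w3}] \<le> card (c ` K2t_edges t)"
    by (intro rainbow_length_le_card_colors[OF T(2) _ finite_K2t_edges]) (use m w1 w2 w3 in auto)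
  then show ?thesis by simp
qed

locale K2t_3_rainbow =
  fixes t :: nat and c :: "nat set \<Rightarrow> nat"
  assumes rainbow_coloring: "k_rainbow_coloring (K2t_vertices t) (K2t_edges t) 3 c"
begin

lemma left_colors_used: "z < 2 \<Longrightarrow> w \<in> K2t_right t \<Longrightarrow> c {z,w} \<in> c ` K2t_edges t"
  by (intro imageI K2t_edgeI)

lemma finite_colors: "finite (c ` K2t_edges t)"
  using finite_K2t_edges by simp

lemma right_rainbow_treeE:
  assumes "w1 \<in> K2t_right t" "w2 \<in> K2t_right t" "w3 \<in> K2t_right t" "distinct [w1,w2,w3]"
  obtains VT ET z1 z2 z3 where "subtree (K2t_vertices t) (K2t_edges t) VT ET" "rainbow c ET"
    "w1 \<in> VT" "w2 \<in> VT" "w3 \<in> VT"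
    "z1 < 2" "z1 \<in> VT" "{z1,w1} \<in> ET" "z2 < 2" "z2 \<in> VT" "{z2,w2} \<in> ET" "z3 < 2" "z3 \<in> VT" "{z3,w3} \<in> ET"
proof -
  have "w1 \<in> K2t_vertices t" "w2 \<in> K2t_vertices t" "w3 \<in> K2t_vertices t"
    using assms K2t_vertices_memI by auto
  then obtain VT ET where T: "subtree (K2t_vertices t) (K2t_edges t) VT ET" "w1 \<in> VT" "w2 \<in> VT" "w3 \<in> VT"
    "rainbow c ET"
    using rainbow_tree_3E[OF rainbow_coloring _ _ _ assms(4)] by blast
  obtain z1 where z1: "z1 < 2" "z1 \<in> VT" "{z1,w1} \<in> ET"
    using K2t_subtree_left_neighbor[OF T(1) assms(1) T(2) T(3)] assms(4) by auto
  obtain z2 where z2: "z2 < 2" "z2 \<in> VT" "{z2,w2} \<in> ET"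
    using K2t_subtree_left_neighbor[OF T(1) assms(2) T(3) T(2)] assms(4) by auto
  obtain z3 where z3: "z3 < 2" "z3 \<in> VT" "{z3,w3} \<in> ET"
    using K2t_subtree_left_neighbor[OF T(1) assms(3) T(4) T(2)] assms(4) by auto
  show ?thesis by (rule that[OF T(1,5,2-4) z1 z2 z3])
qed

lemma card_colors_ge_2:
  assumes "1 \<le> t"
  shows "2 \<le> card (c ` K2t_edges t)"
proof -
  have "2 \<in> K2t_right t" using assms unfolding K2t_right_def by simp
  then have V: "0 \<in> K2t_vertices t" "1 \<in> K2t_vertices t" "2 \<in> K2t_vertices t"
    using K2t_vertices_memI by auto
  have "distinct [0::nat, 1, 2]" by simp
  then obtain VT ET where T: "subtree (K2t_vertices t) (K2t_edges t) VT ET" "0 \<in> VT" "1 \<in> VT"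
    "rainbow c ET"
    using rainbow_tree_3E[OF rainbow_coloring V] by blast
  obtain m where m: "m \<in> K2t_right t" "{0,m} \<in> ET" "{1,m} \<in> ET"
    using K2t_subtree_connector[OF T(1-3)] .
  have "distinct [{0,m}, {1,m}]" using K2t_right_ge_2[OF m(1)] by (simp add: K2t_edge_eq_iff)
  moreover have "ET \<subseteq> K2t_edges t" using T(1) unfolding subtree_def by auto
  ultimately have "length [{0,m}, {1,m}] \<le> card (c ` K2t_edges t)"
    by (intro rainbow_length_le_card_colors[OF T(4) _ finite_K2t_edges]) (use m in auto)
  then show ?thesis by simp
qed

lemma distinct_color_choice:
  assumes "w1 \<in> K2t_right t" "w2 \<in> K2t_right t" "w3 \<in> K2t_right t" "distinct [w1,w2,w3]"
  shows "\<exists>a\<in>{c {0,w1}, c {1,w1}}. \<exists>b\<in>{c {0,w2}, c {1,w2}}. \<exists>d\<in>{c {0,w3}, c {1,w3}}. distinct [a,b,d]"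
proof -
  obtain VT ET z1 z2 z3 where "subtree (K2t_vertices t) (K2t_edges t) VT ET" and T: "rainbow c ET"
    and "w1 \<in> VT" "w2 \<in> VT" "w3 \<in> VT"
    and z: "z1 < 2" "z1 \<in> VT" "{z1,w1} \<in> ET" "z2 < 2" "z2 \<in> VT" "{z2,w2} \<in> ET"
      "z3 < 2" "z3 \<in> VT" "{z3,w3} \<in> ET"
    by (rule right_rainbow_treeE[OF assms])
  have "2 \<le> w1" "2 \<le> w2" "2 \<le> w3" using assms K2t_right_ge_2 by auto
  then have "distinct [{z1,w1}, {z2,w2}, {z3,w3}]" using z assms(4) by (simp add: K2t_edge_eq_iff)
  then have "distinct (map c [{z1,w1}, {z2,w2}, {z3,w3}])" by (rule rainbow_distinct_map[OF T]) (use z in auto)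
  then show ?thesis
    using K2t_left_color_cases[OF z(1), of c w1] K2t_left_color_cases[OF z(4), of c w2]
      K2t_left_color_cases[OF z(7), of c w3]
    by (intro bexI[of _ "c {z1,w1}"] bexI[of _ "c {z2,w2}"] bexI[of _ "c {z3,w3}"]) simp_all
qed

lemma triple_condition_right:
  assumes w: "w1 \<in> K2t_right t" "w2 \<in> K2t_right t" "w3 \<in> K2t_right t" "distinct [w1,w2,w3]"
    and few: "card (c ` K2t_edges t) \<le> 4"
  shows "triple_condition (c {0,w1}) (c {1,w1}) (c {0,w2}) (c {1,w2}) (c {0,w3}) (c {1,w3})"
proof -
  obtain VT ET z1 z2 z3 where T: "subtree (K2t_vertices t) (K2t_edges t) VT ET" "rainbow c ET"
    and "w1 \<in> VT" "w2 \<in> VT" "w3 \<in> VT"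
    and z: "z1 < 2" "z1 \<in> VT" "{z1,w1} \<in> ET" "z2 < 2" "z2 \<in> VT" "{z2,w2} \<in> ET"
      "z3 < 2" "z3 \<in> VT" "{z3,w3} \<in> ET"
    by (rule right_rainbow_treeE[OF w])
  have "2 \<le> w1" "2 \<le> w2" "2 \<le> w3" using w K2t_right_ge_2 by auto
  then have "distinct [{z1,w1}, {z2,w2}, {z3,w3}]" using z w(4) by (simp add: K2t_edge_eq_iff)
  then have edges3: "distinct (map c [{z1,w1}, {z2,w2}, {z3,w3}])"
    by (rule rainbow_distinct_map[OF T(2)]) (use z in auto)
  consider "0 \<notin> VT" | "1 \<notin> VT" | "0 \<in> VT" "1 \<in> VT" by blast
  then show ?thesis
  proof cases
    case 1
    then have "z1 = 1" "z2 = 1" "z3 = 1" using z by (auto simp: less_2_cases_iff)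
    then show ?thesis using edges3 unfolding triple_condition_def by simp
  next
    case 2
    then have "z1 = 0" "z2 = 0" "z3 = 0" using z by (auto simp: less_2_cases_iff)
    then show ?thesis using edges3 unfolding triple_condition_def by simp
  next
    case 3
    then obtain m where m: "m \<in> K2t_right t" "{0,m} \<in> ET" "{1,m} \<in> ET"
      using K2t_subtree_connector[OF T(1)] by blast
    consider "m = w1" | "m = w2" | "m = w3" | "m \<notin> {w1,w2,w3}" by blast
    then show ?thesis
    proof cases
      case 1
      then show ?thesis using K2t_rainbow_hub[OF T m w(2) z(4,6) w(3) z(7,9)] w(4)
        unfolding triple_condition_def by simp
    next
      case 2
      then show ?thesis using K2t_rainbow_hub[OF T m w(1) z(1,3) w(3) z(7,9)] w(4)
        unfolding triple_condition_def by simp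
    next
      case 3
      then show ?thesis using K2t_rainbow_hub[OF T m w(1) z(1,3) w(2) z(4,6)] w(4)
        unfolding triple_condition_def by simp
    next
      case 4
      then have "5 \<le> card (c ` K2t_edges t)"
        using K2t_rainbow_outside_hub[OF T m w(1) z(1,3) w(2) z(4,6) w(3) z(7,9)] w(4) by simp
      then show ?thesis using few by simp
    qed
  qed
qed

lemma t_le_ordered_color_pairs:
  assumes "1 \<le> t"
  shows "t \<le> card (c ` K2t_edges t) * (card (c ` K2t_edges t) - 1)"
proof -
  have "card (K2t_right t) \<le> card (c ` K2t_edges t) * (card (c ` K2t_edges t) - 1)"
    using finite_K2t_right finite_colors card_colors_ge_2[OF assms] left_colors_used
      distinct_color_choice
    by (intro card_le_ordered_pairs_if_distinct_choices[where A = "\<lambda>w. c {0,w}" and B = "\<lambda>w. c {1,w}"])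
      auto
  then show ?thesis by (simp add: card_K2t_right)
qed

lemma t_le_4_if_3_colors:
  assumes "card (c ` K2t_edges t) = 3"
  shows "t \<le> 4"
proof -
  have "card (K2t_right t) \<le> 4"
  proof (rule card_le_4_if_distinct_first_or_second[OF finite_K2t_right finite_colors assms])
    show "(\<lambda>w. c {0,w}) ` K2t_right t \<subseteq> c ` K2t_edges t" "(\<lambda>w. c {1,w}) ` K2t_right t \<subseteq> c ` K2t_edges t"
      using left_colors_used by auto
    fix x y z assume xyz: "x \<in> K2t_right t" "y \<in> K2t_right t" "z \<in> K2t_right t" "distinct [x,y,z]"
    show "distinct [c {0,x}, c {0,y}, c {0,z}] \<or> distinct [c {1,x}, c {1,y}, c {1,z}]"
      using triple_condition_right[OF xyz] assms xyz left_colors_used finite_colors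
      by (intro triple_condition_three_values[where K = "c ` K2t_edges t"]) auto
  qed
  then show ?thesis by (simp add: card_K2t_right)
qed

lemma t_le_8_if_4_colors:
  assumes "card (c ` K2t_edges t) = 4"
  shows "t \<le> 8"
proof -
  have "card (K2t_right t) \<le> 8"
    using finite_K2t_right finite_colors assms left_colors_used triple_condition_right
    by (intro card_le_8_if_triple_condition[where A = "\<lambda>w. c {0,w}" and B = "\<lambda>w. c {1,w}"]) auto
  then show ?thesis by (simp add: card_K2t_right)
qed

lemma card_colors_lower_bounds:
  assumes "1 \<le> t"
  shows "2 \<le> card (c ` K2t_edges t)"
    and "3 \<le> t \<Longrightarrow> 3 \<le> card (c ` K2t_edges t)"
    and "5 \<le> t \<Longrightarrow> 4 \<le> card (c ` K2t_edges t)"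
    and "9 \<le> t \<Longrightarrow> 5 \<le> card (c ` K2t_edges t)"
    and "(k - 1) * (k - 2) < t \<Longrightarrow> k \<le> card (c ` K2t_edges t)"
proof -
  let ?n = "card (c ` K2t_edges t)"
  have n2: "2 \<le> ?n" by (rule card_colors_ge_2[OF assms])
  have pairs: "t \<le> ?n * (?n - 1)" by (rule t_le_ordered_color_pairs[OF assms])
  have "?n = 3 \<Longrightarrow> t \<le> 4" "?n = 4 \<Longrightarrow> t \<le> 8"
    using t_le_4_if_3_colors t_le_8_if_4_colors by auto
  moreover have "?n = 2 \<Longrightarrow> t \<le> 2" using pairs by simp
  ultimately have small: "?n \<le> 4 \<Longrightarrow> t \<le> 8" using n2 by (cases "?n = 2 \<or> ?n = 3") auto
  show "2 \<le> ?n" by (rule n2)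
  show "3 \<le> t \<Longrightarrow> 3 \<le> ?n" using pairs n2 by (cases "?n = 2") auto
  show "5 \<le> t \<Longrightarrow> 4 \<le> ?n"
  proof -
    assume "5 \<le> t"
    then have "?n \<noteq> 2" "?n \<noteq> 3" using pairs \<open>?n = 3 \<Longrightarrow> t \<le> 4\<close> by auto
    then show ?thesis using n2 by linarith
  qed
  show "9 \<le> t \<Longrightarrow> 5 \<le> ?n" using small by linarith
  show "k \<le> ?n" if "(k - 1) * (k - 2) < t"
  proof (rule ccontr)
    assume "\<not> k \<le> ?n"
    then have "?n * (?n - 1) \<le> (k - 1) * (k - 2)" by (intro mult_le_mono) auto
    then show False using that pairs by simp
  qed
qed

end

section \<open>Colorings from color pairs\<close>

text \<open>Max e picks the right endpoint of an edge e = {z, w} with z < 2 \<le> w.\<close>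
definition pair_coloring :: "(nat \<Rightarrow> nat) \<Rightarrow> (nat \<Rightarrow> nat) \<Rightarrow> nat set \<Rightarrow> nat" where
  "pair_coloring A B e = (if 0 \<in> e then A (Max e) else B (Max e))"

lemma pair_coloring_0: "w \<in> K2t_right t \<Longrightarrow> pair_coloring A B {0,w} = A w"
  unfolding pair_coloring_def K2t_right_def by (simp add: max_def)

lemma pair_coloring_1: "w \<in> K2t_right t \<Longrightarrow> pair_coloring A B {1,w} = B w"
  unfolding pair_coloring_def K2t_right_def by (simp add: max_def)

lemma inj_on_pair_coloring_0:
  "L \<subseteq> K2t_right t \<Longrightarrow> inj_on (\<lambda>w. pair_coloring A B {0,w}) L \<longleftrightarrow> inj_on A L"
  by (rule inj_on_cong) (auto simp: pair_coloring_0)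

lemma inj_on_pair_coloring_1:
  "L \<subseteq> K2t_right t \<Longrightarrow> inj_on (\<lambda>w. pair_coloring A B {1,w}) L \<longleftrightarrow> inj_on B L"
  by (rule inj_on_cong) (auto simp: subset_eq pair_coloring_1[simplified])

locale K2t_pair_coloring =
  fixes t :: nat and A B :: "nat \<Rightarrow> nat"
  assumes pair_off_diagonal: "\<And>w. w \<in> K2t_right t \<Longrightarrow> A w \<noteq> B w"
    and pair_inj: "\<And>w w'. w \<in> K2t_right t \<Longrightarrow> w' \<in> K2t_right t \<Longrightarrow> A w = A w' \<Longrightarrow> B w = B w' \<Longrightarrow> w = w'"
    and pair_triangle: "\<And>w1 w2 w3. w1 \<in> K2t_right t \<Longrightarrow> w2 \<in> K2t_right t \<Longrightarrow> w3 \<in> K2t_right t \<Longrightarrow>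
       A w1 = A w2 \<Longrightarrow> B w2 = B w3 \<Longrightarrow> B w1 = A w3 \<Longrightarrow>
       \<exists>m\<in>K2t_right t. A m \<notin> {A w1, B w2, B w1} \<and> B m \<notin> {A w1, B w2, B w1}"
begin

abbreviation rainbow_connected :: "nat set \<Rightarrow> bool" where
  "rainbow_connected S \<equiv> has_rainbow_tree (K2t_vertices t) (K2t_edges t) (pair_coloring A B) S"

lemma star_0_rainbow:
  assumes "finite L" "L \<subseteq> K2t_right t" "inj_on A L"
  shows "rainbow_connected (insert 0 L)"
  using assms inj_on_pair_coloring_0 by (intro K2t_star_rainbow) auto

lemma star_1_rainbow:
  assumes "finite L" "L \<subseteq> K2t_right t" "inj_on B L"
  shows "rainbow_connected (insert 1 L)"
  using assms inj_on_pair_coloring_1 by (intro K2t_star_rainbow) auto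

lemma double_star_rainbow:
  assumes L: "finite L0" "finite L1" "L0 \<subseteq> K2t_right t" "L1 \<subseteq> K2t_right t" "L0 \<inter> L1 = {}"
    and m: "m \<in> K2t_right t" "m \<notin> L0 \<union> L1"
    and colors: "inj_on A L0" "inj_on B L1" "A ` L0 \<inter> B ` L1 = {}"
      "A m \<notin> A ` L0 \<union> B ` L1" "B m \<notin> A ` L0 \<union> B ` L1"
  shows "rainbow_connected ({0, 1, m} \<union> L0 \<union> L1)"
proof (rule K2t_double_star_rainbow[OF L m])
  let ?c = "pair_coloring A B" and ?E0 = "(\<lambda>w. {0,w}) ` L0" and ?E1 = "(\<lambda>w. {1,w}) ` L1"
  have c0: "?c ` ?E0 = A ` L0"
    unfolding image_image using L(3) by (intro image_cong) (auto simp: pair_coloring_0)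
  have c1: "?c ` ?E1 = B ` L1"
    unfolding image_image using L(4) by (intro image_cong) (auto simp: subset_eq pair_coloring_1[simplified])
  have "inj_on ?c ?E0" "inj_on ?c ?E1"
    using inj_on_pair_coloring_0[OF L(3)] inj_on_pair_coloring_1[OF L(4)] colors(1,2)
    by (simp_all add: inj_on_imageI comp_def)
  then have "inj_on ?c (?E0 \<union> ?E1)" unfolding inj_on_Un using c0 c1 colors(3) by blast
  moreover have "?c {0,m} = A m" "?c {1,m} = B m"
    using m(1) pair_coloring_0 pair_coloring_1 by auto
  ultimately have "inj_on ?c (insert {0,m} (insert {1,m} (?E0 \<union> ?E1)))"
    using c0 c1 colors(4,5) pair_off_diagonal[OF m(1)] by (auto simp: inj_on_insert)
  then show "inj_on ?c ({{0,m}, {1,m}} \<union> ?E0 \<union> ?E1)" by simp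
qed

text \<open>Both stars fail on a triple p, q, r only if A p = A q and B q = B r (up to renaming). Route
  through q unless B p = A r; in that case the pairs form a triangle, and the vertex m granted by
  the triangle condition serves as the hub instead.\<close>
lemma rainbow_connected_shared_pairs:
  assumes w: "p \<in> K2t_right t" "q \<in> K2t_right t" "r \<in> K2t_right t" and "distinct [p,q,r]"
    and eq: "A p = A q" "B q = B r"
  shows "rainbow_connected {p,q,r}"
proof -
  have off: "A p \<noteq> B p" "A q \<noteq> B q" "A r \<noteq> B r" using pair_off_diagonal w by auto
  have "A r \<noteq> A q" using pair_inj[of r q] w \<open>distinct [p,q,r]\<close> eq by auto
  moreover have "B p \<noteq> B q" using pair_inj[of p q] w \<open>distinct [p,q,r]\<close> eq by auto
  ultimately show ?thesis
  proof (cases "B p = A r")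
    case False
    have "rainbow_connected ({0, 1, q} \<union> {r} \<union> {p})"
      by (rule double_star_rainbow) (use w \<open>distinct [p,q,r]\<close> eq off \<open>A r \<noteq> A q\<close> \<open>B p \<noteq> B q\<close> False in auto)
    then show ?thesis by (rule has_rainbow_tree_subset) auto
  next
    case True
    obtain m where m: "m \<in> K2t_right t" "A m \<notin> {A p, B q, B p}" "B m \<notin> {A p, B q, B p}"
      using pair_triangle[OF w eq True] by blast
    have "rainbow_connected ({0, 1, m} \<union> {p, r} \<union> {q})"
      by (rule double_star_rainbow)
        (use w \<open>distinct [p,q,r]\<close> eq off \<open>A r \<noteq> A q\<close> \<open>B p \<noteq> B q\<close> True m pair_off_diagonal[OF m(1)] in auto)
    then show ?thesis by (rule has_rainbow_tree_subset) auto
  qed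
qed

lemma rainbow_connected_equal_first:
  assumes w: "x \<in> K2t_right t" "y \<in> K2t_right t" "z \<in> K2t_right t" "distinct [x,y,z]"
    and "A x = A y" "\<not> distinct [B x, B y, B z]"
  shows "rainbow_connected {x,y,z}"
proof -
  consider "B x = B y" | "B x = B z" | "B y = B z" using assms(6) by auto
  then show ?thesis
  proof cases
    case 1
    then show ?thesis using pair_inj[of x y] w \<open>A x = A y\<close> by auto
  next
    case 2
    have "rainbow_connected {y,x,z}"
      by (rule rainbow_connected_shared_pairs) (use w \<open>A x = A y\<close> 2 in auto)
    then show ?thesis by (simp add: insert_commute)
  next
    case 3
    show ?thesis by (rule rainbow_connected_shared_pairs) (use w \<open>A x = A y\<close> 3 in auto)
  qed
qed

lemma rainbow_connected_right_triple:
  assumes w: "x \<in> K2t_right t" "y \<in> K2t_right t" "z \<in> K2t_right t" "distinct [x,y,z]"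
  shows "rainbow_connected {x,y,z}"
proof (cases "distinct [A x, A y, A z]")
  case True
  then have "rainbow_connected (insert 0 {x,y,z})" using w by (intro star_0_rainbow) auto
  then show ?thesis by (rule has_rainbow_tree_subset) auto
next
  case nA: False
  show ?thesis
  proof (cases "distinct [B x, B y, B z]")
    case True
    then have "rainbow_connected (insert 1 {x,y,z})" using w by (intro star_1_rainbow) auto
    then show ?thesis by (rule has_rainbow_tree_subset) auto
  next
    case nB: False
    consider "A x = A y" | "A x = A z" | "A y = A z" using nA by auto
    then show ?thesis
    proof cases
      case 1
      then show ?thesis using rainbow_connected_equal_first[OF w] nB by blast
    next
      case 2
      then have "rainbow_connected {x,z,y}" using rainbow_connected_equal_first[of x z y] w nB by auto
      then show ?thesis by (simp add: insert_commute)
    next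
      case 3
      then have "rainbow_connected {y,z,x}" using rainbow_connected_equal_first[of y z x] w nB by auto
      then show ?thesis by (simp add: insert_commute)
    qed
  qed
qed

lemma rainbow_connected_0_right_pair:
  assumes w: "y \<in> K2t_right t" "z \<in> K2t_right t" "y \<noteq> z"
  shows "rainbow_connected {0,y,z}"
proof (cases "A y = A z")
  case False
  then show ?thesis using w by (intro star_0_rainbow) auto
next
  case True
  then have "B y \<noteq> B z" using pair_inj w by blast
  then have "rainbow_connected ({0, 1, y} \<union> {} \<union> {z})"
    using True w pair_off_diagonal[OF w(1)] pair_off_diagonal[OF w(2)] by (intro double_star_rainbow) auto
  then show ?thesis by (rule has_rainbow_tree_subset) auto
qed

lemma rainbow_connected_1_right_pair:
  assumes w: "y \<in> K2t_right t" "z \<in> K2t_right t" "y \<noteq> z"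
  shows "rainbow_connected {1,y,z}"
proof (cases "B y = B z")
  case False
  then show ?thesis using w by (intro star_1_rainbow) auto
next
  case True
  then have "A y \<noteq> A z" using pair_inj w by blast
  then have "rainbow_connected ({0, 1, y} \<union> {z} \<union> {})"
    using True w pair_off_diagonal[OF w(1)] pair_off_diagonal[OF w(2)] by (intro double_star_rainbow) auto
  then show ?thesis by (rule has_rainbow_tree_subset) auto
qed

lemma rainbow_connected_0_1_right: "z \<in> K2t_right t \<Longrightarrow> rainbow_connected {0,1,z}"
  using double_star_rainbow[of "{}" "{}" z] pair_off_diagonal by simp

theorem k_rainbow_coloring: "k_rainbow_coloring (K2t_vertices t) (K2t_edges t) 3 (pair_coloring A B)"
  unfolding k_rainbow_coloring_iff
proof (intro allI impI)
  fix S assume S: "S \<subseteq> K2t_vertices t \<and> card S = 3"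
  have right: "x \<in> K2t_right t" if "x \<in> S" "x \<noteq> 0" "x \<noteq> 1" for x
    using S that K2t_vertices_cases by blast
  have "finite S" using S by (metis card.infinite zero_neq_numeral)
  consider "0 \<in> S" "1 \<in> S" | "0 \<in> S" "1 \<notin> S" | "0 \<notin> S" "1 \<in> S" | "0 \<notin> S" "1 \<notin> S" by blast
  then show "rainbow_connected S"
  proof cases
    case 1
    have "card (S - {0,1}) = 1" using S 1 \<open>finite S\<close> by (simp add: card_Diff_subset)
    then obtain z where "S - {0,1} = {z}" by (rule card_1_singletonE)
    then have "S = {0,1,z}" "z \<in> K2t_right t" using 1 right[of z] by auto
    then show ?thesis using rainbow_connected_0_1_right by simp
  next
    case 2
    have "card (S - {0}) = 2" using S 2 \<open>finite S\<close> by simp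
    then obtain y z where "S - {0} = {y,z}" "y \<noteq> z" unfolding card_2_iff by blast
    then have "S = {0,y,z}" "y \<in> K2t_right t" "z \<in> K2t_right t" using 2 right[of y] right[of z] by auto
    then show ?thesis using rainbow_connected_0_right_pair \<open>y \<noteq> z\<close> by simp
  next
    case 3
    have "card (S - {1}) = 2" using S 3 \<open>finite S\<close> by simp
    then obtain y z where "S - {1} = {y,z}" "y \<noteq> z" unfolding card_2_iff by blast
    then have "S = {1,y,z}" "y \<in> K2t_right t" "z \<in> K2t_right t" using 3 right[of y] right[of z] by auto
    then show ?thesis using rainbow_connected_1_right_pair \<open>y \<noteq> z\<close> by simp
  next
    case 4
    obtain x y z where "S = {x,y,z}" "distinct [x,y,z]" using S unfolding card_3_iff by auto
    then show ?thesis using 4 right rainbow_connected_right_triple by simp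
  qed
qed

end

definition triangle_condition :: "('b \<times> 'b) set \<Rightarrow> bool" where
  "triangle_condition P \<longleftrightarrow> (\<forall>a b g. (a,g) \<in> P \<longrightarrow> (a,b) \<in> P \<longrightarrow> (g,b) \<in> P \<longrightarrow>
     (\<exists>(x,y)\<in>P. x \<notin> {a,b,g} \<and> y \<notin> {a,b,g}))"

definition triangle_condition_list :: "('b \<times> 'b) list \<Rightarrow> bool" where
  "triangle_condition_list Q \<longleftrightarrow> list_all (\<lambda>(a,g). list_all (\<lambda>(a',b). a' = a \<and> (g,b) \<in> set Q \<longrightarrow>
     list_ex (\<lambda>(x,y). x \<notin> {a,b,g} \<and> y \<notin> {a,b,g}) Q) Q) Q"

lemma triangle_condition_set_iff: "triangle_condition (set Q) \<longleftrightarrow> triangle_condition_list Q"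
  unfolding triangle_condition_def triangle_condition_list_def list_all_iff list_ex_iff by blast

definition valid_pair_list :: "nat \<Rightarrow> (nat \<times> nat) list \<Rightarrow> bool" where
  "valid_pair_list k Q \<longleftrightarrow> distinct Q \<and> (\<forall>(a,b)\<in>set Q. a \<noteq> b \<and> a < k \<and> b < k) \<and> triangle_condition (set Q)"

lemma valid_pair_list_code:
  "valid_pair_list k Q \<longleftrightarrow> distinct Q \<and> list_all (\<lambda>(a,b). a \<noteq> b \<and> a < k \<and> b < k) Q \<and> triangle_condition_list Q"
  unfolding valid_pair_list_def triangle_condition_set_iff list_all_iff ..

lemma K2t_pair_coloring_of_list:
  assumes valid: "valid_pair_list k Q"
  shows "K2t_pair_coloring (length Q) (\<lambda>w. fst (Q ! (w - 2))) (\<lambda>w. snd (Q ! (w - 2)))"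
proof -
  let ?t = "length Q"
  define A where "A w = fst (Q ! (w - 2))" for w
  define B where "B w = snd (Q ! (w - 2))" for w
  have index: "w - 2 < ?t" "(A w, B w) = Q ! (w - 2)" if "w \<in> K2t_right ?t" for w
    using that unfolding A_def B_def K2t_right_def by auto
  have pair_in: "(A w, B w) \<in> set Q" if "w \<in> K2t_right ?t" for w
    using index[OF that] by (metis nth_mem)
  have "K2t_pair_coloring ?t A B"
  proof
    show "A w \<noteq> B w" if "w \<in> K2t_right ?t" for w
      using valid pair_in[OF that] unfolding valid_pair_list_def by auto
    show "w = w'" if w: "w \<in> K2t_right ?t" "w' \<in> K2t_right ?t" and "A w = A w'" "B w = B w'" for w w'
    proof -
      have "Q ! (w - 2) = Q ! (w' - 2)" using index[OF w(1)] index[OF w(2)] that(3,4) by simp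
      then have "w - 2 = w' - 2"
        using valid index(1)[OF w(1)] index(1)[OF w(2)] nth_eq_iff_index_eq
        unfolding valid_pair_list_def by blast
      moreover have "2 \<le> w" "2 \<le> w'" using w K2t_right_ge_2 by auto
      ultimately show ?thesis by simp
    qed
    show "\<exists>m\<in>K2t_right ?t. A m \<notin> {A w1, B w2, B w1} \<and> B m \<notin> {A w1, B w2, B w1}"
      if w: "w1 \<in> K2t_right ?t" "w2 \<in> K2t_right ?t" "w3 \<in> K2t_right ?t"
        and eq: "A w1 = A w2" "B w2 = B w3" "B w1 = A w3" for w1 w2 w3
    proof -
      have "(A w1, B w1) \<in> set Q" "(A w1, B w2) \<in> set Q" "(B w1, B w2) \<in> set Q"
        using pair_in[OF w(1)] pair_in[OF w(2)] pair_in[OF w(3)] eq by simp_all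
      moreover have "triangle_condition (set Q)" using valid unfolding valid_pair_list_def by blast
      ultimately have "\<exists>(x,y)\<in>set Q. x \<notin> {A w1, B w2, B w1} \<and> y \<notin> {A w1, B w2, B w1}"
        unfolding triangle_condition_def by blast
      then obtain i where i: "i < ?t" "fst (Q ! i) \<notin> {A w1, B w2, B w1}" "snd (Q ! i) \<notin> {A w1, B w2, B w1}"
        by (auto simp: in_set_conv_nth)
      then show ?thesis unfolding A_def B_def K2t_right_def by (intro bexI[of _ "i + 2"]) auto
    qed
  qed
  then show ?thesis unfolding A_def B_def .
qed

lemma K2t_coloring_from_pair_list:
  assumes valid: "valid_pair_list k Q" and t: "length Q = t"
  shows "\<exists>c. k_rainbow_coloring (K2t_vertices t) (K2t_edges t) 3 c \<and> card (c ` K2t_edges t) \<le> k"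
proof -
  let ?A = "\<lambda>w. fst (Q ! (w - 2))" and ?B = "\<lambda>w. snd (Q ! (w - 2))"
  interpret K2t_pair_coloring t ?A ?B using K2t_pair_coloring_of_list[OF valid] t by simp
  have "pair_coloring ?A ?B ` K2t_edges t \<subseteq> {..<k}"
  proof
    fix x assume "x \<in> pair_coloring ?A ?B ` K2t_edges t"
    then obtain z w where x: "x = pair_coloring ?A ?B {z,w}" "z < 2" "w \<in> K2t_right t"
      unfolding K2t_edges_def K2t_right_def by auto
    then have "z = 0 \<or> z = 1" by auto
    then have "x \<in> {fst (Q ! (w - 2)), snd (Q ! (w - 2))}" using x pair_coloring_0 pair_coloring_1 by auto
    moreover have "Q ! (w - 2) \<in> set Q" using x(3) t unfolding K2t_right_def by auto
    ultimately show "x \<in> {..<k}" using valid unfolding valid_pair_list_def by auto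
  qed
  then have "card (pair_coloring ?A ?B ` K2t_edges t) \<le> card {..<k}" by (intro card_mono) auto
  then show ?thesis using k_rainbow_coloring by auto
qed

definition pairs_with_max :: "nat \<Rightarrow> (nat \<times> nat) list" where
  "pairs_with_max n = map (\<lambda>i. (i, n)) [0..<n] @ map (\<lambda>i. (n, i)) [0..<n]"

fun all_pairs :: "nat \<Rightarrow> (nat \<times> nat) list" where
  "all_pairs 0 = []"
| "all_pairs (Suc n) = all_pairs n @ pairs_with_max n"

lemma set_pairs_with_max: "set (pairs_with_max n) = {p. (fst p < n \<and> snd p = n) \<or> (fst p = n \<and> snd p < n)}"
  unfolding pairs_with_max_def by auto

lemma set_all_pairs: "set (all_pairs n) = {p. fst p < n \<and> snd p < n \<and> fst p \<noteq> snd p}"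
proof (induction n)
  case (Suc n)
  show ?case unfolding all_pairs.simps set_append Suc set_pairs_with_max by auto
qed simp

lemma distinct_all_pairs: "distinct (all_pairs n)"
proof (induction n)
  case (Suc n)
  have "distinct (pairs_with_max n)" unfolding pairs_with_max_def by (auto simp: distinct_map inj_on_def)
  moreover have "set (all_pairs n) \<inter> set (pairs_with_max n) = {}"
    unfolding set_all_pairs set_pairs_with_max by auto
  ultimately show ?case using Suc by simp
qed simp

lemma length_all_pairs: "length (all_pairs n) = n * (n - 1)"
proof (induction n)
  case (Suc n)
  then have "length (all_pairs (Suc n)) = n * (n - 1) + 2 * n" by (simp add: pairs_with_max_def)
  also have "\<dots> = Suc n * (Suc n - 1)" by (cases n) (simp_all add: algebra_simps)
  finally show ?case .
qed simp

text \<open>Any prefix containing all pairs below k - 1 works: whatever three colors a triangle uses,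
  two of the at least five colors below k - 1 remain.\<close>
lemma valid_pair_list_take_all_pairs:
  assumes "6 \<le> k" "(k - 1) * (k - 2) \<le> t"
  shows "valid_pair_list k (take t (all_pairs k))"
proof -
  let ?Q = "take t (all_pairs k)"
  have "all_pairs k = all_pairs (k - 1) @ pairs_with_max (k - 1)"
    using assms(1) all_pairs.simps(2)[of "k - 1"] by (simp del: all_pairs.simps)
  moreover have "length (all_pairs (k - 1)) \<le> t"
    using assms(2) length_all_pairs[of "k - 1"] by (simp add: numeral_2_eq_2)
  ultimately have prefix: "set (all_pairs (k - 1)) \<subseteq> set ?Q" by (simp add: take_append)
  have "triangle_condition (set ?Q)"
    unfolding triangle_condition_def
  proof (intro allI impI)
    fix a b g :: nat
    have "card {0..<k-1} - card {a,b,g} \<le> card ({0..<k-1} - {a,b,g})" by (rule diff_card_le_card_Diff) simp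
    moreover have "card {a,b,g} \<le> 3" by (simp add: card_insert_le_m1)
    ultimately have "1 < card ({0..<k-1} - {a,b,g})" using assms(1) by simp
    then obtain x y where xy: "x \<in> {0..<k-1} - {a,b,g}" "y \<in> {0..<k-1} - {a,b,g}" "x \<noteq> y"
      by (rule card_gt_1E)
    then have "(x,y) \<in> set (all_pairs (k - 1))" by (simp add: set_all_pairs)
    then have "(x,y) \<in> set ?Q" using prefix by blast
    with xy show "\<exists>(x,y)\<in>set ?Q. x \<notin> {a,b,g} \<and> y \<notin> {a,b,g}" by blast
  qed
  moreover have "distinct ?Q" using distinct_all_pairs by (rule distinct_take)
  moreover have "\<forall>(a,b)\<in>set ?Q. a \<noteq> b \<and> a < k \<and> b < k"
    using set_take_subset[of t "all_pairs k"] by (auto simp: set_all_pairs)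
  ultimately show ?thesis unfolding valid_pair_list_def by blast
qed

lemma list_all_uptD: "list_all P [a..<b] \<Longrightarrow> a \<le> t \<Longrightarrow> t < b \<Longrightarrow> P t"
  by (simp add: list_all_iff)

definition pairs_4 :: "(nat \<times> nat) list" where
  "pairs_4 = [(0,1), (1,0), (0,2), (2,0)]"

definition pairs_20 :: "(nat \<times> nat) list" where
  "pairs_20 = [(0,1), (0,2), (1,0), (1,3), (2,0), (2,3), (3,1), (3,2), (0,4), (1,4),
    (4,3), (4,0), (2,1), (4,2), (3,0), (1,2), (4,1), (3,4), (0,3), (2,4)]"

lemma valid_pair_list_pairs_4:
  "list_all (\<lambda>t. valid_pair_list 2 (take t pairs_4)) [1..<3]"
  "list_all (\<lambda>t. valid_pair_list 3 (take t pairs_4)) [3..<5]"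
  unfolding valid_pair_list_code triangle_condition_list_def pairs_4_def by code_simp+

lemma valid_pair_list_pairs_20:
  "list_all (\<lambda>t. valid_pair_list 4 (take t pairs_20)) [5..<9]"
  "list_all (\<lambda>t. valid_pair_list 5 (take t pairs_20)) [9..<21]"
  unfolding valid_pair_list_code triangle_condition_list_def pairs_20_def by code_simp+

section \<open>The rainbow index of \<open>K\<^sub>2\<^sub>,\<^sub>t\<close>\<close>

lemma rainbow_index_eqI:
  assumes "\<exists>c. k_rainbow_coloring V E k c \<and> card (c ` E) \<le> n"
    and "\<And>c. k_rainbow_coloring V E k c \<Longrightarrow> n \<le> card (c ` E)"
  shows "rainbow_index k V E = n"
proof -
  obtain c0 where c0: "k_rainbow_coloring V E k c0" "card (c0 ` E) \<le> n" using assms(1) by blast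
  have "rainbow_index k V E \<le> card (c0 ` E)"
    unfolding rainbow_index_def by (rule Least_le) (use c0(1) in blast)
  moreover obtain c where "k_rainbow_coloring V E k c" "card (c ` E) = rainbow_index k V E"
    using LeastI_ex[of "\<lambda>n. \<exists>c. k_rainbow_coloring V E k c \<and> card (c ` E) = n"] c0(1)
    unfolding rainbow_index_def by blast
  ultimately show ?thesis using assms(2) c0(2) by (metis le_antisym order_trans)
qed

lemma rainbow_index_K2t_eqI:
  assumes "valid_pair_list k (take t L)" "t \<le> length L"
    and "\<And>c. K2t_3_rainbow t c \<Longrightarrow> k \<le> card (c ` K2t_edges t)"
  shows "rainbow_index 3 (K2t_vertices t) (K2t_edges t) = k"
proof (rule rainbow_index_eqI)
  show "\<exists>c. k_rainbow_coloring (K2t_vertices t) (K2t_edges t) 3 c \<and> card (c ` K2t_edges t) \<le> k"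
    using assms(1,2) by (intro K2t_coloring_from_pair_list) auto
  show "k \<le> card (c ` K2t_edges t)" if "k_rainbow_coloring (K2t_vertices t) (K2t_edges t) 3 c" for c
    using assms(3) K2t_3_rainbow.intro[OF that] by blast
qed

lemma rainbow_index_K2t_large:
  assumes "6 \<le> k" "(k - 1) * (k - 2) < t" "t \<le> k * (k - 1)"
  shows "rainbow_index 3 (K2t_vertices t) (K2t_edges t) = k"
proof (rule rainbow_index_K2t_eqI[where L = "all_pairs k"])
  show "valid_pair_list k (take t (all_pairs k))" using assms by (intro valid_pair_list_take_all_pairs) auto
  show "t \<le> length (all_pairs k)" using assms(3) by (simp only: length_all_pairs)
  show "k \<le> card (c ` K2t_edges t)" if "K2t_3_rainbow t c" for c
    using K2t_3_rainbow.card_colors_lower_bounds(5)[OF that _ assms(2)] assms(2) by linarith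
qed

theorem theorem1:
  fixes t :: nat
  assumes "t \<ge> 1"
  shows "(t \<le> 2 \<longrightarrow> rainbow_index 3 (K2t_vertices t) (K2t_edges t) = 2)
       \<and> (3 \<le> t \<and> t \<le> 4 \<longrightarrow> rainbow_index 3 (K2t_vertices t) (K2t_edges t) = 3)
       \<and> (5 \<le> t \<and> t \<le> 8 \<longrightarrow> rainbow_index 3 (K2t_vertices t) (K2t_edges t) = 4)
       \<and> (9 \<le> t \<and> t \<le> 20 \<longrightarrow> rainbow_index 3 (K2t_vertices t) (K2t_edges t) = 5)
       \<and> (\<forall>k::nat. k \<ge> 6 \<and> (k - 1) * (k - 2) + 1 \<le> t \<and> t \<le> k * (k - 1) \<longrightarrow>
            rainbow_index 3 (K2t_vertices t) (K2t_edges t) = k)"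
proof (intro conjI impI allI)
  note lower = K2t_3_rainbow.card_colors_lower_bounds[OF _ assms]
  have len: "length pairs_4 = 4" "length pairs_20 = 20" by (simp_all add: pairs_4_def pairs_20_def)
  show "rainbow_index 3 (K2t_vertices t) (K2t_edges t) = 2" if "t \<le> 2"
    by (rule rainbow_index_K2t_eqI[OF list_all_uptD[OF valid_pair_list_pairs_4(1)]])
      (use that assms lower(1) len in auto)
  show "rainbow_index 3 (K2t_vertices t) (K2t_edges t) = 3" if "3 \<le> t \<and> t \<le> 4"
    by (rule rainbow_index_K2t_eqI[OF list_all_uptD[OF valid_pair_list_pairs_4(2)]])
      (use that lower(2) len in auto)
  show "rainbow_index 3 (K2t_vertices t) (K2t_edges t) = 4" if "5 \<le> t \<and> t \<le> 8"
    by (rule rainbow_index_K2t_eqI[OF list_all_uptD[OF valid_pair_list_pairs_20(1)]])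
      (use that lower(3) len in auto)
  show "rainbow_index 3 (K2t_vertices t) (K2t_edges t) = 5" if "9 \<le> t \<and> t \<le> 20"
    by (rule rainbow_index_K2t_eqI[OF list_all_uptD[OF valid_pair_list_pairs_20(2)]])
      (use that lower(4) len in auto)
  show "rainbow_index 3 (K2t_vertices t) (K2t_edges t) = k"
    if "k \<ge> 6 \<and> (k - 1) * (k - 2) + 1 \<le> t \<and> t \<le> k * (k - 1)" for k
    using that by (intro rainbow_index_K2t_large) auto
qed

end
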